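(* Let $u:\mathbb{R}^3\times[0,\infty)\to[0,\infty)$ solve $$u_t=\operatorname{div}\big(a[u]\nabla u-u\nabla a[u]\big),\qquad -\Delta a[u]=u\quad\text{in }\mathbb{R}^3\times(0,\infty),$$ with $a[u](x,t)=\frac{1}{4\pi}\int_{\mathbb{R}^3}\frac{u(y,t)}{|x-y|}dy$, and assume $u$ satisfies the $\varepsilon$-Poincaré inequality: for every $\varepsilon>0$ there is $C_\varepsilon>0$ such that for every $t>0$ and every $\phi\in L^1_{loc}(\mathbb{R}^3)$ with finite right-hand side, $\int u(x,t)\phi^2dx\le\varepsilon\int a[u](x,t)|\nabla\phi|^2dx+C_\varepsilon\int\phi^2dx$. Let $p>1$, $k\ge0$, $R>0$, $0\le t<T$, let $Q_R\subset\mathbb{R}^3$ be a ball of radius $R$, let $\eta$ be a smooth nonnegative function supported in $Q_R$, and set $u_k=(u-k)_+$. Then for every $\varepsilon>0$ there is a constant $C(R,\varepsilon,p)$ such that $$(p-1)\int_t^T\!\!\int\eta^2uu_k^p\,dx\,ds\le\varepsilon(p-1)\int_t^T\!\!\int_{Q_R}a[u]|\nabla(\eta u_k^{p/2})|^2dx\,ds+C(R,\varepsilon,p)\int_t^T\!\!\int_{Q_R}\eta^2u_k^p\,dx\,ds,$$ $$pk\int_t^T\!\!\int\eta^2uu_k^{p-1}dx\,ds\le p\varepsilon\int_t^T\!\!\int a[u]|\nabla(\eta u_k^{p/2})|^2dx\,ds+C(R,\varepsilon,p)\int_t^T\!\!\int\eta^2u_k^p\,dx\,ds+2pk^2\int_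0^T\!\!\int\eta^2u_k^{p-1}dx\,ds.$$
   Context: $u$ is a smooth, nonnegative solution with sufficient decay at infinity. All unspecified spatial integrals are over $\mathbb{R}^3$. The constant $C(R,\varepsilon,p)$ may depend on the constants $C_\varepsilon$ of the $\varepsilon$-Poincaré inequality. *)

theory Defs
  imports "HOL-Analysis.Analysis"
begin

fun dderiv :: "('a::real_normed_vector \<Rightarrow> real) \<Rightarrow> 'a list \<Rightarrow> 'a \<Rightarrow> real" where
  "dderiv f [] = f"
| "dderiv f (v # vs) = (\<lambda>x. frechet_derivative (dderiv f vs) (at x) v)"

definition smooth_on :: "'a::real_normed_vector set \<Rightarrow> ('a \<Rightarrow> real) \<Rightarrow> bool" where
  "smooth_on S f \<longleftrightarrow> (\<forall>vs. \<forall>x\<in>S. dderiv f vs differentiable (at x))"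

definition pdir :: "'a \<Rightarrow> ('a::real_normed_vector \<Rightarrow> real) \<Rightarrow> 'a \<Rightarrow> real" where
  "pdir v f x = frechet_derivative f (at x) v"

definition grad3 :: "(real^3 \<Rightarrow> real) \<Rightarrow> real^3 \<Rightarrow> real^3" where
  "grad3 f x = (\<chi> i. frechet_derivative f (at x) (axis i 1))"

definition newton_pot :: "(real^3 \<Rightarrow> real \<Rightarrow> real) \<Rightarrow> real^3 \<Rightarrow> real \<Rightarrow> real" where
  "newton_pot u x t = (1 / (4 * pi)) * (\<integral>y. u y t / dist x y \<partial>lborel)"

definition test_fn :: "(real^3 \<Rightarrow> real) \<Rightarrow> bool" where
  "test_fn \<psi> \<longleftrightarrow> smooth_on UNIV \<psi> \<and> compact (closure {x. \<psi> x \<noteq> 0})"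

definition weak_grad :: "(real^3 \<Rightarrow> real) \<Rightarrow> (real^3 \<Rightarrow> real^3) \<Rightarrow> bool" where
  "weak_grad \<phi> g \<longleftrightarrow>
     (\<forall>K. compact K \<longrightarrow> set_integrable lborel K \<phi> \<and> set_integrable lborel K g) \<and>
     (\<forall>\<psi>. test_fn \<psi> \<longrightarrow> (\<forall>i.
        (\<integral>x. \<phi> x * frechet_derivative \<psi> (at x) (axis i 1) \<partial>lborel)
          = - (\<integral>x. g x $ i * \<psi> x \<partial>lborel)))"

definition solves_PDE :: "(real^3 \<Rightarrow> real \<Rightarrow> real) \<Rightarrow> bool" where
  "solves_PDE u \<longleftrightarrow>
     (let U = (\<lambda>z. u (fst z) (snd z)); A = (\<lambda>z. newton_pot u (fst z) (snd z)) in
      \<forall>x t. t > 0 \<longrightarrow>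
        pdir (0, 1) U (x, t) =
          (\<Sum>i\<in>UNIV. pdir (axis i 1, 0)
              (\<lambda>z. A z * pdir (axis i 1, 0) U z - U z * pdir (axis i 1, 0) A z) (x, t))
      \<and> - (\<Sum>i\<in>UNIV. pdir (axis i 1, 0) (pdir (axis i 1, 0) A) (x, t)) = U (x, t))"

text \<open>The epsilon-Poincare inequality (nonnegative integrals; infinite right-hand side is trivial).\<close>
definition eps_poincare :: "(real^3 \<Rightarrow> real \<Rightarrow> real) \<Rightarrow> bool" where
  "eps_poincare u \<longleftrightarrow>
     (\<forall>\<epsilon>>0. \<exists>C\<epsilon>>0. \<forall>t>0. \<forall>\<phi> g. weak_grad \<phi> g \<longrightarrow>
        (\<integral>\<^sup>+x. ennreal (u x t * (\<phi> x)\<^sup>2) \<partial>lborel)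
          \<le> ennreal \<epsilon> * (\<integral>\<^sup>+x. ennreal (newton_pot u x t * (norm (g x))\<^sup>2) \<partial>lborel)
            + ennreal C\<epsilon> * (\<integral>\<^sup>+x. ennreal ((\<phi> x)\<^sup>2) \<partial>lborel))"

end

theory Submission
  imports Defs
begin

(*
  The estimates hold slice by slice in time, so everything happens at a fixed time s > 0.
  There the epsilon-Poincare inequality is applied to eta * (u - k)_+^(p/2). As r_+^q is not C^1
  for q <= 1, it is first applied to the C^1 approximants eta * r_+^(q+1) / (r_+ + d), r = u - k,
  whose classical gradient is a weak gradient by integration by parts; letting d -> 0 uses
  monotone convergence on the left and dominated convergence for the gradient term. Integrating
  in time gives the first inequality; the second follows from the same slice inequality and the
  pointwise bound k u u_k^(p-1) <= u u_k^p + 2 k^2 u_k^(p-1).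
*)

section \<open>Smooth functions and integration by parts\<close>

lemma smooth_on_differentiable: "smooth_on S f \<Longrightarrow> x \<in> S \<Longrightarrow> f differentiable (at x)"
  unfolding smooth_on_def by (metis dderiv.simps(1))

lemma smooth_on_has_derivative:
  "smooth_on S f \<Longrightarrow> x \<in> S \<Longrightarrow> (f has_derivative frechet_derivative f (at x)) (at x)"
  using smooth_on_differentiable frechet_derivative_works by blast

lemma smooth_on_continuous_on: "smooth_on S f \<Longrightarrow> continuous_on S f"
  by (intro continuous_at_imp_continuous_on ballI differentiable_imp_continuous_within
      smooth_on_differentiable)

lemma smooth_on_continuous_on_derivative:
  assumes "smooth_on S f"
  shows "continuous_on S (\<lambda>y. frechet_derivative f (at y) v)"
proof (intro continuous_at_imp_continuous_on ballI differentiable_imp_continuous_within)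
  fix x assume "x \<in> S"
  with assms show "(\<lambda>y. frechet_derivative f (at y) v) differentiable (at x)"
    unfolding smooth_on_def by (drule_tac spec[of _ "[v]"]) simp
qed

lemma has_derivative_imp_continuous_on:
  "(\<And>x. (f has_derivative D x) (at x)) \<Longrightarrow> continuous_on UNIV f"
  using has_derivative_continuous continuous_at_imp_continuous_on by blast

lemma has_derivative_outside_support:
  assumes "closed K" "\<And>y. y \<notin> K \<Longrightarrow> f y = 0" "(f has_derivative D) (at x)" "x \<notin> K"
  shows "D v = 0"
proof -
  have "((\<lambda>_. 0) has_derivative (\<lambda>_. 0)) (at x)" by simp
  then have "(f has_derivative (\<lambda>_. 0)) (at x)"
    by (rule has_derivative_transform_within_open[where s="- K"]) (use assms in auto)
  then have "(\<lambda>_. 0) = D"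
    using assms(3) by (rule has_derivative_unique)
  then show ?thesis by (metis)
qed

lemma has_derivative_eq_0_at_min:
  fixes f :: "'a::real_normed_vector \<Rightarrow> real"
  assumes "\<And>y. f y \<ge> 0" "(f has_derivative D) (at x)" "f x = 0"
  shows "D v = 0"
proof -
  have "D = (\<lambda>v. 0)"
    by (rule differential_zero_maxmin[of x UNIV, OF _ _ assms(2)]) (use assms in auto)
  then show ?thesis by simp
qed

lemma compact_continuous_on_abs_bound:
  fixes f :: "'a::topological_space \<Rightarrow> real"
  assumes "compact K" "continuous_on K f"
  obtains M where "\<And>x. x \<in> K \<Longrightarrow> \<bar>f x\<bar> \<le> M"
proof -
  have "bounded (f ` K)" using compact_continuous_image[OF assms(2,1)] by (rule compact_imp_bounded)
  then show ?thesis using that unfolding bounded_iff by auto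
qed

lemma integrable_continuous_compact_support:
  fixes f :: "'a::euclidean_space \<Rightarrow> 'b::{banach, second_countable_topology}"
  assumes "continuous_on UNIV f" "compact K" "\<And>x. x \<notin> K \<Longrightarrow> f x = 0"
  shows "integrable lborel f"
proof -
  have "integrable lborel (\<lambda>x. indicator K x *\<^sub>R f x)"
    using assms by (intro borel_integrable_compact) (auto intro: continuous_on_subset)
  also have "(\<lambda>x. indicator K x *\<^sub>R f x) = f"
    using assms by (auto simp: indicator_def fun_eq_iff)
  finally show ?thesis .
qed

lemma lborel_integral_translate:
  fixes h :: "'a::euclidean_space \<Rightarrow> real"
  assumes "integrable lborel h"
  shows "integrable lborel (\<lambda>x. h (x + c))" "(\<integral>x. h (x + c) \<partial>lborel) = (\<integral>x. h x \<partial>lborel)"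
proof -
  have [measurable]: "h \<in> borel_measurable borel"
    using assms by (simp add: borel_measurable_integrable)
  have "integrable (distr lborel borel ((+) c)) h" using assms by (simp add: lborel_distr_plus)
  then have "integrable lborel (\<lambda>x. h (c + x))"
    by (subst (asm) integrable_distr_eq) auto
  then show "integrable lborel (\<lambda>x. h (x + c))" by (simp only: add.commute)
  have "(\<integral>x. h x \<partial>lborel) = (\<integral>x. h x \<partial>distr lborel borel ((+) c))"
    by (simp add: lborel_distr_plus)
  also have "\<dots> = (\<integral>x. h (c + x) \<partial>lborel)"
    by (rule integral_distr) auto
  finally show "(\<integral>x. h (x + c) \<partial>lborel) = (\<integral>x. h x \<partial>lborel)" by (simp only: add.commute)
qed

lemma add_notin_of_notin_sums_cball:
  fixes x y :: "'a::real_normed_vector"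
  assumes "x \<notin> {a + b | a b. a \<in> K \<and> b \<in> cball 0 r}" "norm y \<le> r"
  shows "x + y \<notin> K"
proof
  assume "x + y \<in> K"
  moreover have "- y \<in> cball 0 r" using assms(2) by simp
  moreover have "x = (x + y) + - y" by simp
  ultimately have "x \<in> {a + b | a b. a \<in> K \<and> b \<in> cball 0 r}" by blast
  with assms(1) show False by contradiction
qed

lemma has_real_derivative_along_line:
  assumes "\<And>x. (h has_derivative D x) (at x)"
  shows "((\<lambda>\<tau>. h (x + \<tau> *\<^sub>R e)) has_real_derivative D (x + \<tau> *\<^sub>R e) e) (at \<tau>)"
proof -
  have "((\<lambda>\<tau>. x + \<tau> *\<^sub>R e) has_derivative (\<lambda>s. s *\<^sub>R e)) (at \<tau>)"
    by (auto intro!: derivative_eq_intros)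
  from diff_chain_at[OF this assms]
  have "((\<lambda>\<tau>. h (x + \<tau> *\<^sub>R e)) has_derivative (\<lambda>s. D (x + \<tau> *\<^sub>R e) (s *\<^sub>R e))) (at \<tau>)"
    by (simp add: o_def)
  moreover have "linear (D (x + \<tau> *\<^sub>R e))" using assms has_derivative_linear by blast
  ultimately have "((\<lambda>\<tau>. h (x + \<tau> *\<^sub>R e)) has_derivative (\<lambda>s. s * D (x + \<tau> *\<^sub>R e) e)) (at \<tau>)"
    by (simp add: linear_scale)
  then show ?thesis unfolding has_field_derivative_def
    by (rule has_derivative_eq_rhs) (auto simp: fun_eq_iff)
qed

lemma difference_quotient_bound:
  fixes h :: "'a::real_normed_vector \<Rightarrow> real"
  assumes "\<And>x. (h has_derivative D x) (at x)" "\<And>x. \<bar>D x e\<bar> \<le> M" "\<tau> > 0"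
  shows "\<bar>(h (x + \<tau> *\<^sub>R e) - h x) / \<tau>\<bar> \<le> M"
proof -
  obtain z where "h (x + \<tau> *\<^sub>R e) - h (x + 0 *\<^sub>R e) = (\<tau> - 0) * D (x + z *\<^sub>R e) e"
    using MVT2[of 0 \<tau> "\<lambda>\<tau>. h (x + \<tau> *\<^sub>R e)" "\<lambda>\<tau>. D (x + \<tau> *\<^sub>R e) e"]
      has_real_derivative_along_line[OF assms(1)] assms(3) by blast
  then show ?thesis using assms(2,3) by simp
qed

lemma difference_quotient_tendsto:
  assumes "\<And>x. (h has_derivative D x) (at x)"
  shows "(\<lambda>m. (h (x + (1 / Suc m) *\<^sub>R e) - h x) / (1 / Suc m)) \<longlonglongrightarrow> D x e"
proof -
  have "((\<lambda>\<tau>. (h (x + \<tau> *\<^sub>R e) - h (x + 0 *\<^sub>R e)) / (\<tau> - 0)) \<longlongrightarrow> D (x + 0 *\<^sub>R e) e) (at 0)"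
    using has_real_derivative_along_line[OF assms, of x e 0]
    unfolding has_field_derivative_iff by simp
  then have L: "((\<lambda>\<tau>. (h (x + \<tau> *\<^sub>R e) - h x) / \<tau>) \<longlongrightarrow> D x e) (at 0)" by simp
  have "(\<lambda>m. 1 / real (Suc m)) \<longlonglongrightarrow> 0"
    using LIMSEQ_inverse_real_of_nat by (simp add: inverse_eq_divide)
  then show ?thesis
    using LIMSEQ_SEQ_conv[THEN iffD2, OF L, rule_format, of "\<lambda>m. 1 / real (Suc m)"] by simp
qed

text \<open>The difference quotients in direction \<open>e\<close> have integral \<open>0\<close> by translation invariance
  and converge dominatedly to the derivative.\<close>

lemma integral_derivative_compact_support:
  fixes h :: "'a::euclidean_space \<Rightarrow> real"
  assumes deriv: "\<And>x. (h has_derivative D x) (at x)"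
    and cont: "continuous_on UNIV (\<lambda>x. D x e)"
    and K: "compact K" and supp: "\<And>x. x \<notin> K \<Longrightarrow> h x = 0"
  shows "integrable lborel (\<lambda>x. D x e)" "(\<integral>x. D x e \<partial>lborel) = 0"
proof -
  have D0: "D x e = 0" if "x \<notin> K" for x
    using has_derivative_outside_support[OF compact_imp_closed[OF K] supp deriv that] .
  show Dint: "integrable lborel (\<lambda>x. D x e)"
    using cont K D0 by (rule integrable_continuous_compact_support)
  obtain M0 where "\<And>x. x \<in> K \<Longrightarrow> \<bar>D x e\<bar> \<le> M0"
    using compact_continuous_on_abs_bound[OF K continuous_on_subset[OF cont subset_UNIV]] by blast
  then obtain M where M: "\<And>x. \<bar>D x e\<bar> \<le> M"
    using D0 by (metis abs_zero max.cobounded2 max.coboundedI1)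
  have hint: "integrable lborel h"
    using has_derivative_imp_continuous_on[OF deriv] K supp by (rule integrable_continuous_compact_support)
  define t :: "nat \<Rightarrow> real" where "t m = 1 / Suc m" for m
  have t: "0 < t m" "t m \<le> 1" for m unfolding t_def by auto
  define q where "q m x = (h (x + t m *\<^sub>R e) - h x) / t m" for m x
  define K' where "K' = {x + y | x y. x \<in> K \<and> y \<in> cball 0 (norm e)}"
  have K': "compact K'" unfolding K'_def by (intro compact_sums K compact_cball)
  have q_bound: "\<bar>q m x\<bar> \<le> M * indicator K' x" for m x
  proof (cases "x \<in> K'")
    case False
    have "norm (t m *\<^sub>R e) \<le> norm e" using t[of m] by (simp add: mult_left_le_one_le)
    from add_notin_of_notin_sums_cball[OF False[unfolded K'_def] this]
      add_notin_of_notin_sums_cball[OF False[unfolded K'_def], of 0]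
    have "x + t m *\<^sub>R e \<notin> K" "x \<notin> K" by simp_all
    then show ?thesis using False supp by (simp add: q_def)
  qed (use difference_quotient_bound[OF deriv M t(1)] in \<open>simp add: q_def\<close>)
  have q_lim: "(\<lambda>m. q m x) \<longlonglongrightarrow> D x e" for x
    unfolding q_def t_def by (rule difference_quotient_tendsto[OF deriv])
  have hm[measurable]: "h \<in> borel_measurable borel" using hint by (simp add: borel_measurable_integrable)
  have q_int: "(\<integral>x. q m x \<partial>lborel) = 0" for m
    unfolding q_def using lborel_integral_translate[OF hint] hint by (simp add: integral_diff)
  have "(\<lambda>m. \<integral>x. q m x \<partial>lborel) \<longlonglongrightarrow> (\<integral>x. D x e \<partial>lborel)"
  proof (rule integral_dominated_convergence[where w="\<lambda>x. M * indicator K' x"])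
    show "integrable lborel (\<lambda>x. M * indicator K' x)"
      using K' by (auto intro!: emeasure_compact_finite borel_compact)
  qed (use Dint q_bound q_lim in \<open>auto simp: q_def borel_measurable_integrable\<close>)
  then show "(\<integral>x. D x e \<partial>lborel) = 0"
    unfolding q_int by (simp add: LIMSEQ_const_iff)
qed

lemma integral_by_parts_test_fn:
  fixes \<phi> :: "'a::euclidean_space \<Rightarrow> real"
  assumes deriv: "\<And>x. (\<phi> has_derivative D x) (at x)"
    and cont: "continuous_on UNIV (\<lambda>x. D x e)"
    and \<psi>: "smooth_on UNIV \<psi>" "compact (closure {x. \<psi> x \<noteq> 0})"
  shows "(\<integral>x. \<phi> x * frechet_derivative \<psi> (at x) e \<partial>lborel) = - (\<integral>x. D x e * \<psi> x \<partial>lborel)"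
proof -
  let ?K = "closure {x. \<psi> x \<noteq> 0}"
  let ?D\<psi> = "\<lambda>x. frechet_derivative \<psi> (at x)"
  have \<psi>0: "\<psi> x = 0" if "x \<notin> ?K" for x
    using that closure_subset[of "{x. \<psi> x \<noteq> 0}"] by auto
  have \<psi>d: "(\<psi> has_derivative ?D\<psi> x) (at x)" for x
    using smooth_on_has_derivative[OF \<psi>(1)] by simp
  have D\<psi>0: "?D\<psi> x e = 0" if "x \<notin> ?K" for x
    using has_derivative_outside_support[OF closed_closure \<psi>0 \<psi>d that] .
  have c1: "continuous_on UNIV (\<lambda>x. \<phi> x * ?D\<psi> x e)"
    using has_derivative_imp_continuous_on[OF deriv] smooth_on_continuous_on_derivative[OF \<psi>(1)]
    by (rule continuous_on_mult)
  have c2: "continuous_on UNIV (\<lambda>x. D x e * \<psi> x)"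
    using cont has_derivative_imp_continuous_on[OF \<psi>d] by (rule continuous_on_mult)
  have int1: "integrable lborel (\<lambda>x. \<phi> x * ?D\<psi> x e)"
    using c1 \<psi>(2) by (rule integrable_continuous_compact_support) (metis D\<psi>0 mult_zero_right)
  have int2: "integrable lborel (\<lambda>x. D x e * \<psi> x)"
    using c2 \<psi>(2) by (rule integrable_continuous_compact_support) (metis \<psi>0 mult_zero_right)
  have "(\<integral>x. \<phi> x * ?D\<psi> x e + D x e * \<psi> x \<partial>lborel) = 0"
    using has_derivative_mult[OF deriv \<psi>d] continuous_on_add[OF c1 c2] \<psi>(2)
    by (rule integral_derivative_compact_support(2)) (metis \<psi>0 mult_zero_right)
  then show ?thesis
    by (simp add: Bochner_Integration.integral_add[OF int1 int2] eq_neg_iff_add_eq_0)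
qed

lemma weak_grad_grad3:
  fixes \<phi> :: "real^3 \<Rightarrow> real"
  assumes deriv: "\<And>x. (\<phi> has_derivative D x) (at x)"
    and cont: "\<And>v. continuous_on UNIV (\<lambda>x. D x v)"
  shows "weak_grad \<phi> (grad3 \<phi>)"
proof -
  have grad: "grad3 \<phi> = (\<lambda>x. \<chi> i. D x (axis i 1))"
    using frechet_derivative_at[OF deriv] by (simp add: grad3_def fun_eq_iff)
  have \<phi>_cont: "continuous_on UNIV \<phi>" using deriv by (rule has_derivative_imp_continuous_on)
  have grad_cont: "continuous_on UNIV (grad3 \<phi>)"
    unfolding grad by (intro continuous_on_vec_lambda cont)
  have "set_integrable lborel K \<phi>" "set_integrable lborel K (grad3 \<phi>)" if "compact K" for K
    unfolding set_integrable_def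
    by (rule borel_integrable_compact[OF that continuous_on_subset[OF \<phi>_cont subset_UNIV]],
        rule borel_integrable_compact[OF that continuous_on_subset[OF grad_cont subset_UNIV]])
  moreover have "(\<integral>x. \<phi> x * frechet_derivative \<psi> (at x) (axis i 1) \<partial>lborel)
      = - (\<integral>x. grad3 \<phi> x $ i * \<psi> x \<partial>lborel)" if "test_fn \<psi>" for \<psi> and i :: 3
    using that unfolding test_fn_def grad using integral_by_parts_test_fn[OF deriv cont] by simp
  ultimately show ?thesis unfolding weak_grad_def by blast
qed

section \<open>A \<open>C\<^sup>1\<close> approximation of \<open>r\<^sub>+\<^sup>q\<close>\<close>

text \<open>It increases to \<open>r\<^sub>+\<^sup>q\<close> as \<open>d \<down> 0\<close>; needed because \<open>r\<^sub>+\<^sup>q\<close> itself is not \<open>C\<^sup>1\<close> when \<open>q \<le> 1\<close>.\<close>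

definition pos_pow_approx :: "real \<Rightarrow> real \<Rightarrow> real \<Rightarrow> real" where
  "pos_pow_approx q d r = max r 0 powr (q + 1) / (max r 0 + d)"

definition pos_pow_approx_deriv :: "real \<Rightarrow> real \<Rightarrow> real \<Rightarrow> real" where
  "pos_pow_approx_deriv q d r = max r 0 powr q * (q * max r 0 + (q + 1) * d) / (max r 0 + d)\<^sup>2"

lemma pos_pow_approx_nonpos:
  "r \<le> 0 \<Longrightarrow> pos_pow_approx q d r = 0" "r \<le> 0 \<Longrightarrow> pos_pow_approx_deriv q d r = 0"
  unfolding pos_pow_approx_def pos_pow_approx_deriv_def by simp_all

lemma pos_pow_approx_pos: "r > 0 \<Longrightarrow> pos_pow_approx q d r = r powr q * r / (r + d)"
  unfolding pos_pow_approx_def by (simp add: powr_add)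

lemma continuous_on_pos_pow_approx_deriv:
  assumes "q > 0" "d > 0"
  shows "continuous_on UNIV (pos_pow_approx_deriv q d)"
  unfolding pos_pow_approx_deriv_def using assms
  by (intro continuous_on_divide continuous_on_mult continuous_on_powr' continuous_intros)
     (auto simp: add_nonneg_pos)

lemma pos_pow_approx_has_real_derivative_0:
  assumes "q > 0" "d > 0"
  shows "(pos_pow_approx q d has_real_derivative 0) (at 0)"
  unfolding has_field_derivative_iff
proof (rule Lim_null_comparison)
  have "((\<lambda>y. max y 0 powr q / d) \<longlongrightarrow> max 0 0 powr q / d) (at 0)"
    by (intro tendsto_intros tendsto_powr') (use assms in \<open>auto intro!: tendsto_eq_intros\<close>)
  then show "((\<lambda>y. max y 0 powr q / d) \<longlongrightarrow> 0) (at 0)" by simp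
  have "\<bar>pos_pow_approx q d y / y\<bar> \<le> max y 0 powr q / d" for y
  proof (cases "y > 0")
    case True
    then have "\<bar>pos_pow_approx q d y / y\<bar> = y powr q / (y + d)"
      using assms by (simp add: pos_pow_approx_pos abs_mult)
    also have "\<dots> \<le> y powr q / d" using True assms by (intro divide_left_mono) auto
    finally show ?thesis using True by simp
  qed (simp add: pos_pow_approx_nonpos)
  then show "\<forall>\<^sub>F y in at 0. norm ((pos_pow_approx q d y - pos_pow_approx q d 0) / (y - 0))
      \<le> max y 0 powr q / d"
    by (simp add: pos_pow_approx_nonpos)
qed

lemma pos_pow_approx_has_real_derivative:
  assumes q: "q > 0" and d: "d > 0"
  shows "(pos_pow_approx q d has_real_derivative pos_pow_approx_deriv q d r) (at r)"
proof -
  consider "r < 0" | "r = 0" | "r > 0" by linarith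
  then show ?thesis
  proof cases
    case 1
    have "((\<lambda>_. 0) has_real_derivative 0) (at r)" by simp
    then have "(pos_pow_approx q d has_real_derivative 0) (at r)"
      by (rule has_field_derivative_transform_within_open[where S="{..<0}"])
         (use 1 in \<open>auto simp: pos_pow_approx_nonpos\<close>)
    then show ?thesis using 1 by (simp add: pos_pow_approx_nonpos)
  next
    case 2
    then show ?thesis
      using pos_pow_approx_has_real_derivative_0[OF q d] by (simp add: pos_pow_approx_nonpos)
  next
    case 3
    have "((\<lambda>r. r powr (q + 1) / (r + d)) has_real_derivative
            ((q + 1) * r powr (q + 1 - 1) * (r + d) - r powr (q + 1) * 1) / ((r + d) * (r + d))) (at r)"
      using 3 d by (intro DERIV_divide has_real_derivative_powr derivative_eq_intros) auto
    moreover have "r powr (q + 1) = r powr q * r" using 3 by (simp add: powr_add)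
    ultimately have "((\<lambda>r. r powr (q + 1) / (r + d)) has_real_derivative pos_pow_approx_deriv q d r) (at r)"
      using 3 by (simp add: pos_pow_approx_deriv_def power2_eq_square algebra_simps)
    then show ?thesis
      by (rule has_field_derivative_transform_within_open[where S="{0<..}"])
         (use 3 in \<open>auto simp: pos_pow_approx_def\<close>)
  qed
qed

lemma continuous_on_pos_pow_approx: "q > 0 \<Longrightarrow> d > 0 \<Longrightarrow> continuous_on UNIV (pos_pow_approx q d)"
  by (intro continuous_at_imp_continuous_on ballI DERIV_isCont[OF pos_pow_approx_has_real_derivative])

lemma pos_pow_approx_nonneg: "d > 0 \<Longrightarrow> 0 \<le> pos_pow_approx q d r"
  unfolding pos_pow_approx_def by (simp add: add_nonneg_pos)

lemma pos_pow_approx_le: "d > 0 \<Longrightarrow> pos_pow_approx q d r \<le> max r 0 powr q"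
proof (cases "r > 0")
  case True
  assume d: "d > 0"
  have "pos_pow_approx q d r = r powr q * (r / (r + d))" using True by (simp add: pos_pow_approx_pos)
  also have "\<dots> \<le> r powr q * 1" using True d by (intro mult_left_mono) auto
  finally show ?thesis using True by simp
qed (simp add: pos_pow_approx_nonpos)

lemma pos_pow_approx_antimono: "0 < d2 \<Longrightarrow> d2 \<le> d1 \<Longrightarrow> pos_pow_approx q d1 r \<le> pos_pow_approx q d2 r"
  unfolding pos_pow_approx_def by (intro divide_left_mono) (auto intro!: mult_pos_pos add_nonneg_pos)

lemma pos_pow_approx_deriv_nonneg: "q > 0 \<Longrightarrow> d > 0 \<Longrightarrow> 0 \<le> pos_pow_approx_deriv q d r"
  unfolding pos_pow_approx_deriv_def by (intro divide_nonneg_nonneg mult_nonneg_nonneg add_nonneg_nonneg) auto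

lemma pos_pow_approx_deriv_le:
  assumes q: "q > 0" and d: "d > 0" and r: "r > 0"
  shows "pos_pow_approx_deriv q d r \<le> (q + 1) * r powr (q - 1)"
proof -
  have key: "r * (q * r + (q + 1) * d) \<le> (q + 1) * (r + d)\<^sup>2"
  proof -
    have "(q + 1) * (r + d)\<^sup>2 - r * (q * r + (q + 1) * d) = r\<^sup>2 + (q + 1) * r * d + (q + 1) * d\<^sup>2"
      by (simp add: power2_eq_square algebra_simps)
    also have "\<dots> \<ge> 0" using q d r by (intro add_nonneg_nonneg mult_nonneg_nonneg) auto
    finally show ?thesis by simp
  qed
  have "pos_pow_approx_deriv q d r = r powr (q - 1) * (r * (q * r + (q + 1) * d)) / (r + d)\<^sup>2"
    unfolding pos_pow_approx_deriv_def using r by (simp add: powr_diff mult.assoc)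
  also have "\<dots> \<le> r powr (q - 1) * ((q + 1) * (r + d)\<^sup>2) / (r + d)\<^sup>2"
    by (intro divide_right_mono mult_left_mono key) auto
  also have "\<dots> = (q + 1) * r powr (q - 1)" using r d by simp
  finally show ?thesis .
qed

lemma pos_pow_approx_tendsto:
  "(\<lambda>n. pos_pow_approx q (1 / Suc n) r) \<longlonglongrightarrow> max r 0 powr q"
proof (cases "r > 0")
  case True
  have "(\<lambda>n. r powr q * r / (r + 1 / Suc n)) \<longlonglongrightarrow> r powr q * r / (r + 0)"
    using True by (intro tendsto_intros LIMSEQ_inverse_real_of_nat[unfolded inverse_eq_divide]) auto
  then show ?thesis using True by (simp add: pos_pow_approx_pos)
qed (simp add: pos_pow_approx_nonpos)

lemma pos_pow_approx_deriv_tendsto: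
  "(\<lambda>n. pos_pow_approx_deriv q (1 / Suc n) r) \<longlonglongrightarrow> (if r > 0 then q * r powr (q - 1) else 0)"
proof (cases "r > 0")
  case True
  have "(\<lambda>n. r powr q * (q * r + (q + 1) * (1 / Suc n)) / (r + 1 / Suc n)\<^sup>2)
      \<longlonglongrightarrow> r powr q * (q * r + (q + 1) * 0) / (r + 0)\<^sup>2"
    using True by (intro tendsto_intros LIMSEQ_inverse_real_of_nat[unfolded inverse_eq_divide]) auto
  moreover have "r powr q * (q * r + (q + 1) * 0) / (r + 0)\<^sup>2 = q * r powr (q - 1)"
    using True by (simp add: powr_diff power2_eq_square)
  ultimately show ?thesis using True unfolding pos_pow_approx_deriv_def by simp
qed (simp add: pos_pow_approx_nonpos)

section \<open>The Poincare inequality on a time slice\<close>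

definition deriv_vec :: "(real^'n \<Rightarrow> real^'n \<Rightarrow> real) \<Rightarrow> real^'n \<Rightarrow> real^'n" where
  "deriv_vec D x = (\<chi> i. D x (axis i 1))"

lemma grad3_eq_deriv_vec: "(\<phi> has_derivative D x) (at x) \<Longrightarrow> grad3 \<phi> x = deriv_vec D x"
  unfolding grad3_def deriv_vec_def using frechet_derivative_at by metis

lemma continuous_on_deriv_vec:
  "(\<And>v. continuous_on S (\<lambda>x. D x v)) \<Longrightarrow> continuous_on S (deriv_vec D)"
  unfolding deriv_vec_def by (intro continuous_on_vec_lambda)

lemma has_derivative_cutoff_comp:
  fixes U \<eta> :: "'a::real_normed_vector \<Rightarrow> real"
  assumes "(U has_derivative DU) (at x)" "(\<eta> has_derivative D\<eta>) (at x)"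
    and "(G has_real_derivative G') (at (U x - k))"
  shows "((\<lambda>x. \<eta> x * G (U x - k)) has_derivative
           (\<lambda>v. D\<eta> v * G (U x - k) + \<eta> x * (G' * DU v))) (at x)"
proof -
  have "((\<lambda>x. U x - k) has_derivative DU) (at x)"
    using has_derivative_diff[OF assms(1) has_derivative_const] by simp
  from diff_chain_at[OF this assms(3)[unfolded has_field_derivative_def]]
  have "((\<lambda>x. G (U x - k)) has_derivative (\<lambda>v. G' * DU v)) (at x)"
    by (simp add: o_def)
  from has_derivative_mult[OF assms(2) this] show ?thesis
    by (simp add: algebra_simps)
qed

text \<open>Unlike \<^const>\<open>grad3\<close> it is given by a formula, so it is measurable in all variables.\<close>

definition cutoff_pow_grad :: "real \<Rightarrow> real \<Rightarrow> (real^3 \<Rightarrow> real) \<Rightarrow> (real^3 \<Rightarrow> real^3 \<Rightarrow> real)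
    \<Rightarrow> (real^3 \<Rightarrow> real) \<Rightarrow> (real^3 \<Rightarrow> real^3 \<Rightarrow> real) \<Rightarrow> real^3 \<Rightarrow> real^3" where
  "cutoff_pow_grad q k U DU \<eta> D\<eta> x = max (U x - k) 0 powr q *\<^sub>R deriv_vec D\<eta> x
      + (\<eta> x * (q * (if U x > k then (U x - k) powr (q - 1) else 0))) *\<^sub>R deriv_vec DU x"

lemma square_sum_le: "(a + b)\<^sup>2 \<le> 2 * a\<^sup>2 + 2 * b\<^sup>2" for a b :: real
  using sum_squares_ge_zero[of "a - b" 0] by (simp add: power2_eq_square algebra_simps)

locale cutoff_slice =
  fixes U \<eta> :: "real^3 \<Rightarrow> real" and DU D\<eta> :: "real^3 \<Rightarrow> real^3 \<Rightarrow> real" and q k :: real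
  assumes q_pos: "q > 0"
    and U_deriv: "\<And>x. (U has_derivative DU x) (at x)"
    and DU_cont: "\<And>v. continuous_on UNIV (\<lambda>x. DU x v)"
    and \<eta>_deriv: "\<And>x. (\<eta> has_derivative D\<eta> x) (at x)"
    and D\<eta>_cont: "\<And>v. continuous_on UNIV (\<lambda>x. D\<eta> x v)"
    and U_nonneg: "\<And>x. U x \<ge> 0"
    and \<eta>_nonneg: "\<And>x. \<eta> x \<ge> 0"
    and \<eta>_support: "bounded {x. \<eta> x \<noteq> 0}"
begin

abbreviation "trunc x \<equiv> max (U x - k) 0 powr q"

abbreviation "grad \<equiv> cutoff_pow_grad q k U DU \<eta> D\<eta>"

definition approx :: "nat \<Rightarrow> real^3 \<Rightarrow> real" where
  "approx n x = \<eta> x * pos_pow_approx q (1 / Suc n) (U x - k)"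

definition approx_grad :: "nat \<Rightarrow> real^3 \<Rightarrow> real^3" where
  "approx_grad n x = pos_pow_approx q (1 / Suc n) (U x - k) *\<^sub>R deriv_vec D\<eta> x
      + (\<eta> x * pos_pow_approx_deriv q (1 / Suc n) (U x - k)) *\<^sub>R deriv_vec DU x"

lemma U_cont: "continuous_on UNIV U"
  using U_deriv by (rule has_derivative_imp_continuous_on)

lemma \<eta>_cont: "continuous_on UNIV \<eta>"
  using \<eta>_deriv by (rule has_derivative_imp_continuous_on)

lemma continuous_on_approx_parts:
  "continuous_on UNIV (\<lambda>x. pos_pow_approx q (1 / Suc n) (U x - k))"
  "continuous_on UNIV (\<lambda>x. pos_pow_approx_deriv q (1 / Suc n) (U x - k))"
proof -
  have d: "1 / real (Suc n) > 0" by simp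
  have Uk: "continuous_on UNIV (\<lambda>x. U x - k)" using U_cont by (intro continuous_intros)
  show "continuous_on UNIV (\<lambda>x. pos_pow_approx q (1 / Suc n) (U x - k))"
      "continuous_on UNIV (\<lambda>x. pos_pow_approx_deriv q (1 / Suc n) (U x - k))"
    using continuous_on_compose2[OF continuous_on_pos_pow_approx[OF q_pos d] Uk]
      continuous_on_compose2[OF continuous_on_pos_pow_approx_deriv[OF q_pos d] Uk] by auto
qed

lemma weak_grad_approx: "weak_grad (approx n) (approx_grad n)"
proof -
  let ?d = "1 / real (Suc n)"
  define D where "D x v = D\<eta> x v * pos_pow_approx q ?d (U x - k)
      + \<eta> x * (pos_pow_approx_deriv q ?d (U x - k) * DU x v)" for x v
  have deriv: "(approx n has_derivative D x) (at x)" for x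
    unfolding approx_def[abs_def] D_def
    by (rule has_derivative_cutoff_comp[OF U_deriv \<eta>_deriv pos_pow_approx_has_real_derivative])
       (use q_pos in auto)
  have "continuous_on UNIV (\<lambda>x. D x v)" for v
    unfolding D_def using D\<eta>_cont DU_cont \<eta>_cont continuous_on_approx_parts
    by (intro continuous_intros) auto
  then have "weak_grad (approx n) (grad3 (approx n))"
    by (rule weak_grad_grad3[OF deriv])
  moreover have "grad3 (approx n) x = approx_grad n x" for x
    using grad3_eq_deriv_vec[where D=D and x=x, OF deriv]
    by (simp add: approx_grad_def deriv_vec_def D_def vec_eq_iff algebra_simps)
  then have "grad3 (approx n) = approx_grad n" ..
  ultimately show ?thesis by simp
qed

lemma approx_bounds: "0 \<le> pos_pow_approx q (1 / Suc n) (U x - k)" "pos_pow_approx q (1 / Suc n) (U x - k) \<le> trunc x"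
  by (simp_all add: pos_pow_approx_nonneg pos_pow_approx_le)

lemma approx_sq_le: "(approx n x)\<^sup>2 \<le> (\<eta> x * trunc x)\<^sup>2"
  unfolding approx_def using approx_bounds \<eta>_nonneg
  by (intro power_mono mult_left_mono) (auto intro: mult_nonneg_nonneg)

lemma approx_sq_mono: "(approx n x)\<^sup>2 \<le> (approx (Suc n) x)\<^sup>2"
  unfolding approx_def using approx_bounds \<eta>_nonneg
  by (intro power_mono mult_left_mono pos_pow_approx_antimono) (auto simp: frac_le)

lemma approx_tendsto: "(\<lambda>n. approx n x) \<longlonglongrightarrow> \<eta> x * trunc x"
  unfolding approx_def by (intro tendsto_mult tendsto_const pos_pow_approx_tendsto)

lemma approx_grad_tendsto: "(\<lambda>n. approx_grad n x) \<longlonglongrightarrow> grad x"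
proof -
  have "(\<lambda>n. pos_pow_approx_deriv q (1 / Suc n) (U x - k))
      \<longlonglongrightarrow> q * (if U x > k then (U x - k) powr (q - 1) else 0)"
    using pos_pow_approx_deriv_tendsto[of q "U x - k"] by (cases "U x > k") auto
  then show ?thesis unfolding approx_grad_def cutoff_pow_grad_def
    by (intro tendsto_intros pos_pow_approx_tendsto)
qed

lemma trunc_cont: "continuous_on UNIV trunc"
  by (rule continuous_on_powr') (use q_pos U_cont in \<open>auto intro!: continuous_intros\<close>)

lemma measurable_slice [measurable]:
  "U \<in> borel_measurable borel" "\<eta> \<in> borel_measurable borel"
  "deriv_vec DU \<in> borel_measurable borel" "deriv_vec D\<eta> \<in> borel_measurable borel"
  using U_cont \<eta>_cont continuous_on_deriv_vec[OF DU_cont] continuous_on_deriv_vec[OF D\<eta>_cont]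
  by (simp_all add: borel_measurable_continuous_onI)

lemma measurable_approx [measurable]:
  "approx n \<in> borel_measurable borel" "approx_grad n \<in> borel_measurable borel"
proof -
  have [measurable]: "(\<lambda>x. pos_pow_approx q (1 / Suc n) (U x - k)) \<in> borel_measurable borel"
      "(\<lambda>x. pos_pow_approx_deriv q (1 / Suc n) (U x - k)) \<in> borel_measurable borel"
    using continuous_on_approx_parts by (auto intro!: borel_measurable_continuous_onI)
  show "approx n \<in> borel_measurable borel" "approx_grad n \<in> borel_measurable borel"
    unfolding approx_def[abs_def] approx_grad_def[abs_def] by measurable
qed

lemma measurable_grad [measurable]: "grad \<in> borel_measurable borel"
  unfolding cutoff_pow_grad_def[abs_def] by measurable

lemma norm_approx_grad_le:
  defines "c \<equiv> (q + 1) / q"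
  shows "norm (approx_grad n x) \<le> (1 + c) * (trunc x * norm (deriv_vec D\<eta> x)) + c * norm (grad x)"
proof -
  let ?g = "pos_pow_approx q (1 / Suc n) (U x - k)"
  let ?d = "pos_pow_approx_deriv q (1 / Suc n) (U x - k)"
  let ?P = "if U x > k then (U x - k) powr (q - 1) else 0"
  let ?de = "deriv_vec D\<eta> x" and ?du = "deriv_vec DU x"
  have c: "c \<ge> 0" "c * q = q + 1" unfolding c_def using q_pos by auto
  have P: "?P \<ge> 0" by simp
  have d: "0 \<le> ?d" "?d \<le> c * (q * ?P)"
  proof -
    show "0 \<le> ?d" using q_pos by (simp add: pos_pow_approx_deriv_nonneg)
    show "?d \<le> c * (q * ?P)"
    proof (cases "U x > k")
      case True
      then have "?d \<le> (q + 1) * (U x - k) powr (q - 1)"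
        using q_pos by (intro pos_pow_approx_deriv_le) auto
      with True c show ?thesis by (simp add: mult.assoc[symmetric])
    qed (simp add: pos_pow_approx_nonpos)
  qed
  have "norm (approx_grad n x) \<le> norm (?g *\<^sub>R ?de) + norm ((\<eta> x * ?d) *\<^sub>R ?du)"
    unfolding approx_grad_def by (rule norm_triangle_ineq)
  also have "\<dots> = ?g * norm ?de + (\<eta> x * ?d) * norm ?du"
    using approx_bounds(1) \<eta>_nonneg[of x] d(1) by simp
  also have "\<dots> \<le> trunc x * norm ?de + (\<eta> x * (c * (q * ?P))) * norm ?du"
    using approx_bounds(2) d(2) \<eta>_nonneg[of x] by (intro add_mono mult_right_mono mult_left_mono) auto
  also have "(\<eta> x * (c * (q * ?P))) * norm ?du = c * norm (grad x - trunc x *\<^sub>R ?de)"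
    unfolding cutoff_pow_grad_def using \<eta>_nonneg[of x] q_pos P c(1) by (simp add: abs_mult)
  also have "c * norm (grad x - trunc x *\<^sub>R ?de) \<le> c * (norm (grad x) + trunc x * norm ?de)"
    using c(1) norm_triangle_ineq4[of "grad x" "trunc x *\<^sub>R ?de"] by (intro mult_left_mono) simp_all
  finally show ?thesis using c by (simp add: algebra_simps)
qed

lemma nn_integral_cutoff_term_finite:
  assumes "continuous_on UNIV A"
  shows "(\<integral>\<^sup>+x. ennreal (A x * (trunc x * norm (deriv_vec D\<eta> x))\<^sup>2) \<partial>lborel) < \<infinity>"
proof -
  let ?w = "\<lambda>x. A x * (trunc x * norm (deriv_vec D\<eta> x))\<^sup>2"
  let ?K = "closure {x. \<eta> x \<noteq> 0}"
  have K: "compact ?K" using \<eta>_support by (simp add: compact_closure)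
  have "continuous_on UNIV (\<lambda>x. trunc x * norm (deriv_vec D\<eta> x))"
    using trunc_cont continuous_on_norm[OF continuous_on_deriv_vec[OF D\<eta>_cont]]
    by (rule continuous_on_mult)
  then have "continuous_on UNIV ?w" by (rule continuous_on_mult[OF assms continuous_on_power])
  then obtain M where M: "\<And>x. x \<in> ?K \<Longrightarrow> \<bar>?w x\<bar> \<le> M"
    using compact_continuous_on_abs_bound[OF K continuous_on_subset] by blast
  have "ennreal (?w x) \<le> ennreal M * indicator ?K x" for x
  proof (cases "x \<in> ?K")
    case True
    then have "?w x \<le> M" using M[of x] by linarith
    then show ?thesis using True by (simp add: ennreal_leI)
  next
    case False
    then have "\<eta> x = 0" using closure_subset[of "{x. \<eta> x \<noteq> 0}"] by auto
    then have "deriv_vec D\<eta> x = 0"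
      using has_derivative_eq_0_at_min[OF \<eta>_nonneg \<eta>_deriv] by (simp add: deriv_vec_def vec_eq_iff)
    then show ?thesis by simp
  qed
  then have "(\<integral>\<^sup>+x. ?w x \<partial>lborel) \<le> (\<integral>\<^sup>+x. ennreal M * indicator ?K x \<partial>lborel)"
    by (rule nn_integral_mono)
  also have "\<dots> = ennreal M * emeasure lborel ?K"
    using K by (intro nn_integral_cmult_indicator) (simp add: borel_compact)
  also have "\<dots> < \<infinity>"
    using emeasure_compact_finite[OF K] by (simp add: ennreal_mult_less_top)
  finally show ?thesis .
qed

lemma approx_grad_energy_bound:
  assumes "a \<ge> 0"
  defines "c \<equiv> (q + 1) / q"
  shows "a * (norm (approx_grad n x))\<^sup>2
    \<le> 2 * (1 + c)\<^sup>2 * (a * (trunc x * norm (deriv_vec D\<eta> x))\<^sup>2) + 2 * c\<^sup>2 * (a * (norm (grad x))\<^sup>2)"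
proof -
  have "(norm (approx_grad n x))\<^sup>2 \<le> ((1 + c) * (trunc x * norm (deriv_vec D\<eta> x)) + c * norm (grad x))\<^sup>2"
    by (rule power_mono[OF norm_approx_grad_le[of n x, folded c_def]]) simp
  also have "\<dots> \<le> 2 * ((1 + c) * (trunc x * norm (deriv_vec D\<eta> x)))\<^sup>2 + 2 * (c * norm (grad x))\<^sup>2"
    by (rule square_sum_le)
  finally have "a * (norm (approx_grad n x))\<^sup>2
      \<le> a * (2 * ((1 + c) * (trunc x * norm (deriv_vec D\<eta> x)))\<^sup>2 + 2 * (c * norm (grad x))\<^sup>2)"
    using assms(1) by (rule mult_left_mono)
  then show ?thesis by (simp add: power2_eq_square algebra_simps)
qed

lemma nn_integral_approx_grad_tendsto:
  assumes A: "continuous_on UNIV A" "\<And>x. A x \<ge> 0"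
    and fin: "(\<integral>\<^sup>+x. ennreal (A x * (norm (grad x))\<^sup>2) \<partial>lborel) < \<infinity>"
  shows "(\<lambda>n. \<integral>\<^sup>+x. ennreal (A x * (norm (approx_grad n x))\<^sup>2) \<partial>lborel)
      \<longlonglongrightarrow> (\<integral>\<^sup>+x. ennreal (A x * (norm (grad x))\<^sup>2) \<partial>lborel)"
proof -
  define c where "c = (q + 1) / q"
  define w1 where "w1 x = 2 * (1 + c)\<^sup>2 * (A x * (trunc x * norm (deriv_vec D\<eta> x))\<^sup>2)" for x
  define w2 where "w2 x = 2 * c\<^sup>2 * (A x * (norm (grad x))\<^sup>2)" for x
  have [measurable]: "A \<in> borel_measurable borel" using A(1) by (rule borel_measurable_continuous_onI)
  have [measurable]: "w1 \<in> borel_measurable borel" "w2 \<in> borel_measurable borel"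
    unfolding w1_def[abs_def] w2_def[abs_def] by measurable
  have bound: "A x * (norm (approx_grad n x))\<^sup>2 \<le> w1 x + w2 x" for n x
    unfolding w1_def w2_def c_def using approx_grad_energy_bound[OF A(2)] .
  have w_nonneg: "w1 x \<ge> 0" "w2 x \<ge> 0" for x using A(2) by (simp_all add: w1_def w2_def)
  have cmult: "(\<integral>\<^sup>+x. ennreal (a * f x) \<partial>lborel) = ennreal a * (\<integral>\<^sup>+x. ennreal (f x) \<partial>lborel)"
    if "a \<ge> 0" "\<And>x. f x \<ge> 0" "f \<in> borel_measurable borel" for a and f :: "real^3 \<Rightarrow> real"
    using that by (simp add: ennreal_mult nn_integral_cmult)
  have "(\<integral>\<^sup>+x. ennreal (w1 x + w2 x) \<partial>lborel)
      = (\<integral>\<^sup>+x. ennreal (w1 x) \<partial>lborel) + (\<integral>\<^sup>+x. ennreal (w2 x) \<partial>lborel)"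
    using w_nonneg by (subst nn_integral_add[symmetric]) (auto simp: ennreal_plus)
  also have "(\<integral>\<^sup>+x. ennreal (w1 x) \<partial>lborel)
      = ennreal (2 * (1 + c)\<^sup>2) * (\<integral>\<^sup>+x. ennreal (A x * (trunc x * norm (deriv_vec D\<eta> x))\<^sup>2) \<partial>lborel)"
    unfolding w1_def by (rule cmult) (use A(2) in simp_all)
  also have "(\<integral>\<^sup>+x. ennreal (w2 x) \<partial>lborel)
      = ennreal (2 * c\<^sup>2) * (\<integral>\<^sup>+x. ennreal (A x * (norm (grad x))\<^sup>2) \<partial>lborel)"
    unfolding w2_def by (rule cmult) (use A(2) in simp_all)
  also have "ennreal (2 * (1 + c)\<^sup>2) * (\<integral>\<^sup>+x. ennreal (A x * (trunc x * norm (deriv_vec D\<eta> x))\<^sup>2) \<partial>lborel)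
      + ennreal (2 * c\<^sup>2) * (\<integral>\<^sup>+x. ennreal (A x * (norm (grad x))\<^sup>2) \<partial>lborel) < \<infinity>"
    using nn_integral_cutoff_term_finite[OF A(1)] fin by (simp add: ennreal_mult_less_top)
  finally have w_fin: "(\<integral>\<^sup>+x. ennreal (w1 x + w2 x) \<partial>lborel) < \<infinity>" .
  have lim: "(\<lambda>n. ennreal (A x * (norm (approx_grad n x))\<^sup>2)) \<longlonglongrightarrow> ennreal (A x * (norm (grad x))\<^sup>2)" for x
    by (intro tendsto_ennrealI tendsto_mult tendsto_const tendsto_power tendsto_norm approx_grad_tendsto)
  show ?thesis
  proof (rule nn_integral_dominated_convergence[OF _ _ _ _ w_fin])
    show "AE x in lborel. ennreal (A x * (norm (approx_grad n x))\<^sup>2) \<le> ennreal (w1 x + w2 x)" for n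
      using bound by (intro AE_I2 ennreal_leI)
    show "AE x in lborel. (\<lambda>n. ennreal (A x * (norm (approx_grad n x))\<^sup>2))
        \<longlonglongrightarrow> ennreal (A x * (norm (grad x))\<^sup>2)"
      using lim by (intro AE_I2)
    show "(\<lambda>x. ennreal (A x * (norm (approx_grad n x))\<^sup>2)) \<in> borel_measurable lborel" for n
      by measurable
    show "(\<lambda>x. ennreal (A x * (norm (grad x))\<^sup>2)) \<in> borel_measurable lborel"
      by measurable
    show "(\<lambda>x. ennreal (w1 x + w2 x)) \<in> borel_measurable lborel"
      by measurable
  qed
qed

lemma nn_integral_approx_tendsto:
  "(\<lambda>n. \<integral>\<^sup>+x. ennreal (U x * (approx n x)\<^sup>2) \<partial>lborel)
     \<longlonglongrightarrow> (\<integral>\<^sup>+x. ennreal ((\<eta> x)\<^sup>2 * U x * (trunc x)\<^sup>2) \<partial>lborel)"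
proof (rule nn_integral_LIMSEQ)
  show "incseq (\<lambda>n x. ennreal (U x * (approx n x)\<^sup>2))"
    using approx_sq_mono U_nonneg by (intro incseq_SucI le_funI ennreal_leI mult_left_mono)
  show "(\<lambda>x. ennreal (U x * (approx n x)\<^sup>2)) \<in> borel_measurable lborel" for n
    by measurable
  show "(\<lambda>n. ennreal (U x * (approx n x)\<^sup>2)) \<longlonglongrightarrow> ennreal ((\<eta> x)\<^sup>2 * U x * (trunc x)\<^sup>2)" for x
    using approx_tendsto[of x]
    by (auto intro!: tendsto_ennrealI tendsto_eq_intros simp: power_mult_distrib)
qed

lemma poincare_cutoff_pow:
  assumes A: "continuous_on UNIV A" "\<And>x. A x \<ge> 0" and \<epsilon>: "\<epsilon> > 0"
    and poincare: "\<And>\<phi> g. weak_grad \<phi> g \<Longrightarrow>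
        (\<integral>\<^sup>+x. ennreal (U x * (\<phi> x)\<^sup>2) \<partial>lborel)
          \<le> ennreal \<epsilon> * (\<integral>\<^sup>+x. ennreal (A x * (norm (g x))\<^sup>2) \<partial>lborel)
            + ennreal C * (\<integral>\<^sup>+x. ennreal ((\<phi> x)\<^sup>2) \<partial>lborel)"
  shows "(\<integral>\<^sup>+x. ennreal ((\<eta> x)\<^sup>2 * U x * (trunc x)\<^sup>2) \<partial>lborel)
     \<le> ennreal \<epsilon> * (\<integral>\<^sup>+x. ennreal (A x * (norm (grad x))\<^sup>2) \<partial>lborel)
       + ennreal C * (\<integral>\<^sup>+x. ennreal ((\<eta> x)\<^sup>2 * (trunc x)\<^sup>2) \<partial>lborel)"
    (is "_ \<le> ennreal \<epsilon> * ?G + ennreal C * ?Y")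
proof (cases "?G = \<infinity>")
  case True
  then show ?thesis using \<epsilon> by (simp add: ennreal_mult_top)
next
  case False
  let ?Gn = "\<lambda>n. \<integral>\<^sup>+x. ennreal (A x * (norm (approx_grad n x))\<^sup>2) \<partial>lborel"
  have "(\<lambda>n. ennreal \<epsilon> * ?Gn n + ennreal C * ?Y) \<longlonglongrightarrow> ennreal \<epsilon> * ?G + ennreal C * ?Y"
    using nn_integral_approx_grad_tendsto[OF A] False
    by (intro tendsto_add ennreal_tendsto_cmult tendsto_const) (auto simp: less_top)
  moreover have "(\<integral>\<^sup>+x. ennreal (U x * (approx n x)\<^sup>2) \<partial>lborel) \<le> ennreal \<epsilon> * ?Gn n + ennreal C * ?Y" for n
  proof -
    have "(\<integral>\<^sup>+x. ennreal ((approx n x)\<^sup>2) \<partial>lborel) \<le> ?Y"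
      using approx_sq_le by (intro nn_integral_mono ennreal_leI) (simp add: power_mult_distrib)
    then show ?thesis
      using poincare[OF weak_grad_approx[of n]] by (meson add_left_mono mult_left_mono order_trans zero_le)
  qed
  ultimately show ?thesis
    by (intro LIMSEQ_le[OF nn_integral_approx_tendsto]) auto
qed

lemma grad3_cutoff_pow:
  assumes "U x > k"
  shows "grad3 (\<lambda>y. \<eta> y * trunc y) x = grad x"
proof -
  define D where "D v = D\<eta> x v * (U x - k) powr q + \<eta> x * (q * (U x - k) powr (q - 1) * DU x v)" for v
  have "((\<lambda>r. r powr q) has_real_derivative q * (U x - k) powr (q - 1)) (at (U x - k))"
    using assms by (intro has_real_derivative_powr) simp
  from has_derivative_cutoff_comp[OF U_deriv \<eta>_deriv this]
  have "((\<lambda>y. \<eta> y * (U y - k) powr q) has_derivative D) (at x)" unfolding D_def .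
  then have "((\<lambda>y. \<eta> y * trunc y) has_derivative D) (at x)"
  proof (rule has_derivative_transform_within_open[where s="{y. k < U y}"])
    show "open {y. k < U y}" using U_cont by (intro open_Collect_less) (auto intro: continuous_intros)
  qed (use assms in auto)
  then show ?thesis
    using assms unfolding grad3_def cutoff_pow_grad_def deriv_vec_def D_def
    by (simp add: frechet_derivative_at[symmetric] vec_eq_iff algebra_simps)
qed

lemma norm_grad_le_grad3: "norm (grad x) \<le> norm (grad3 (\<lambda>y. \<eta> y * trunc y) x)"
  by (cases "U x > k") (simp_all add: grad3_cutoff_pow cutoff_pow_grad_def)

lemma grad_eq_0: "\<eta> x = 0 \<Longrightarrow> grad x = 0"
  using has_derivative_eq_0_at_min[OF \<eta>_nonneg \<eta>_deriv]
  by (simp add: cutoff_pow_grad_def deriv_vec_def vec_eq_iff)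

end

section \<open>Integration in time\<close>

lemma measurable_nn_integral_slice:
  fixes f :: "real \<Rightarrow> 'a::euclidean_space \<Rightarrow> ennreal"
  assumes "(\<lambda>z. f (fst z) (snd z)) \<in> borel_measurable borel"
  shows "(\<lambda>s. \<integral>\<^sup>+x. f s x \<partial>lborel) \<in> borel_measurable lborel"
proof -
  have "case_prod f \<in> borel_measurable (lborel \<Otimes>\<^sub>M lborel)"
    unfolding lborel_prod using assms by (simp add: case_prod_beta')
  then show ?thesis by (rule lborel.borel_measurable_nn_integral)
qed

lemma borel_measurable_positive_time:
  fixes f :: "'a::topological_space \<times> real \<Rightarrow> real"
  assumes "continuous_on (UNIV \<times> {0<..}) f"
  shows "(\<lambda>z. if fst z > 0 then f (snd z, fst z) else 0) \<in> borel_measurable borel"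
proof -
  let ?S = "{z :: real \<times> 'a. fst z > 0}"
  have "open ?S" by (rule open_Collect_less) (auto intro: continuous_intros)
  moreover have "continuous_on ?S (\<lambda>z. (snd z, fst z))" by (intro continuous_intros)
  then have "continuous_on ?S (\<lambda>z. f (snd z, fst z))"
    by (rule continuous_on_compose2[OF assms]) auto
  ultimately have "(\<lambda>z. indicator ?S z *\<^sub>R f (snd z, fst z)) \<in> borel_measurable borel"
    by (intro borel_measurable_continuous_on_indicator borel_open)
  also have "(\<lambda>z. indicator ?S z *\<^sub>R f (snd z, fst z)) = (\<lambda>z. if fst z > 0 then f (snd z, fst z) else 0)"
    by (auto simp: fun_eq_iff indicator_def)
  finally show ?thesis .
qed

lemma borel_measurable_vec_lambda:
  fixes f :: "'a \<Rightarrow> 'n::finite \<Rightarrow> real"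
  assumes "\<And>i. (\<lambda>x. f x i) \<in> borel_measurable M"
  shows "(\<lambda>x. \<chi> i. f x i) \<in> borel_measurable M"
proof (subst borel_measurable_euclidean_space, intro ballI)
  fix b :: "real^'n" assume "b \<in> Basis"
  then obtain i where "b = axis i 1" unfolding Basis_vec_def by auto
  then show "(\<lambda>x. (\<chi> i. f x i) \<bullet> b) \<in> borel_measurable M"
    using assms[of i] by (simp add: inner_axis)
qed

lemma set_nn_integral_cmult:
  "f \<in> borel_measurable M \<Longrightarrow> S \<in> sets M \<Longrightarrow> (\<integral>\<^sup>+x\<in>S. c * f x \<partial>M) = c * (\<integral>\<^sup>+x\<in>S. f x \<partial>M)"
  by (simp add: mult.assoc nn_integral_cmult)

text \<open>Where \<open>u \<le> 2 k\<close> use \<open>k u \<le> 2 k\<^sup>2\<close>; elsewhere \<open>k \<le> u - k\<close>.\<close>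

lemma truncation_level_ineq:
  fixes u k p w :: real
  assumes "u \<ge> 0" "k \<ge> 0" "w \<ge> 0"
  shows "k * (w * u * max (u - k) 0 powr (p - 1))
    \<le> w * u * max (u - k) 0 powr p + 2 * k\<^sup>2 * (w * max (u - k) 0 powr (p - 1))"
proof (cases "u > k")
  case True
  define m where "m = u - k"
  have m: "m > 0" "max (u - k) 0 = m" using True unfolding m_def by auto
  have mp: "m powr p = m * m powr (p - 1)" using m by (simp add: powr_diff)
  show ?thesis
  proof (cases "m \<ge> k")
    case True
    then have "k * (w * u * m powr (p - 1)) \<le> w * u * m powr p"
      using assms by (simp add: mp mult.left_commute mult_right_mono)
    then show ?thesis using m(2) assms by (simp add: add_increasing2)
  next
    case False
    then have "k * u \<le> 2 * k\<^sup>2" using assms unfolding m_def by (simp add: power2_eq_square)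
    then have "(k * u) * (w * m powr (p - 1)) \<le> (2 * k\<^sup>2) * (w * m powr (p - 1))"
      using assms by (intro mult_right_mono) simp_all
    then have "k * (w * u * m powr (p - 1)) \<le> 2 * k\<^sup>2 * (w * m powr (p - 1))"
      by (simp add: algebra_simps)
    then show ?thesis using m(2) assms by (simp add: add_increasing)
  qed
qed simp

lemma set_nn_integral_Icc_mono_AE:
  fixes f g :: "real \<Rightarrow> ennreal"
  assumes "\<And>s. s \<in> {t<..T} \<Longrightarrow> f s \<le> g s"
  shows "(\<integral>\<^sup>+s\<in>{t..T}. f s \<partial>lborel) \<le> (\<integral>\<^sup>+s\<in>{t..T}. g s \<partial>lborel)"
proof (rule nn_integral_mono_AE)
  show "AE s in lborel. f s * indicator {t..T} s \<le> g s * indicator {t..T} s"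
    using AE_lborel_singleton[of t]
    by eventually_elim (use assms in \<open>auto simp: indicator_def\<close>)
qed

lemma set_nn_integral_le_lincomb:
  assumes [measurable]: "f \<in> borel_measurable M" "g \<in> borel_measurable M" "h \<in> borel_measurable M"
    "z \<in> borel_measurable M" "S \<in> sets M"
    and "AE x\<in>S in M. c * f x \<le> a * g x + b * h x + d * z x"
  shows "c * (\<integral>\<^sup>+x\<in>S. f x \<partial>M) \<le> a * (\<integral>\<^sup>+x\<in>S. g x \<partial>M) + b * (\<integral>\<^sup>+x\<in>S. h x \<partial>M) + d * (\<integral>\<^sup>+x\<in>S. z x \<partial>M)"
proof -
  have "c * (\<integral>\<^sup>+x\<in>S. f x \<partial>M) = (\<integral>\<^sup>+x\<in>S. c * f x \<partial>M)"
    by (simp add: set_nn_integral_cmult)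
  also have "\<dots> \<le> (\<integral>\<^sup>+x\<in>S. a * g x + b * h x + d * z x \<partial>M)"
    using assms(6) by (intro nn_set_integral_mono) auto
  also have "\<dots> = a * (\<integral>\<^sup>+x\<in>S. g x \<partial>M) + b * (\<integral>\<^sup>+x\<in>S. h x \<partial>M) + d * (\<integral>\<^sup>+x\<in>S. z x \<partial>M)"
    by (simp add: nn_set_integral_add set_nn_integral_cmult)
  finally show ?thesis .
qed

lemma powr_half_squared: "(a powr (p / 2))\<^sup>2 = a powr p" for a p :: real
  by (simp add: power2_eq_square powr_add[symmetric])

locale poincare_solution =
  fixes u :: "real^3 \<Rightarrow> real \<Rightarrow> real" and \<epsilon> C :: real
  assumes nonneg: "\<And>x t. t \<ge> 0 \<Longrightarrow> u x t \<ge> 0"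
    and smooth_u: "smooth_on (UNIV \<times> {0<..}) (\<lambda>z. u (fst z) (snd z))"
    and continuous_u: "continuous_on (UNIV \<times> {0..}) (\<lambda>z. u (fst z) (snd z))"
    and smooth_pot: "smooth_on (UNIV \<times> {0<..}) (\<lambda>z. newton_pot u (fst z) (snd z))"
    and \<epsilon>_pos: "\<epsilon> > 0"
    and poincare: "\<And>t \<phi> g. t > 0 \<Longrightarrow> weak_grad \<phi> g \<Longrightarrow>
        (\<integral>\<^sup>+x. ennreal (u x t * (\<phi> x)\<^sup>2) \<partial>lborel)
          \<le> ennreal \<epsilon> * (\<integral>\<^sup>+x. ennreal (newton_pot u x t * (norm (g x))\<^sup>2) \<partial>lborel)
            + ennreal C * (\<integral>\<^sup>+x. ennreal ((\<phi> x)\<^sup>2) \<partial>lborel)"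
begin

text \<open>Extensions to all times \<open>s \<in> \<real>\<close> of \<open>u\<close>, \<open>a[u]\<close> and the spatial derivative of \<open>u\<close>, which are
  controlled only for \<open>s \<ge> 0\<close> resp. \<open>s > 0\<close>; they make time integrands measurable.\<close>

definition u_clamp :: "real \<Rightarrow> real^3 \<Rightarrow> real" where
  "u_clamp s x = u x (max s 0)"

definition pot_pos :: "real \<Rightarrow> real^3 \<Rightarrow> real" where
  "pot_pos s x = (if s > 0 then newton_pot u x s else 0)"

definition du :: "real \<Rightarrow> real^3 \<Rightarrow> real^3 \<Rightarrow> real" where
  "du s x v = (if s > 0 then frechet_derivative (\<lambda>z. u (fst z) (snd z)) (at (x, s)) (v, 0) else 0)"

lemma u_clamp_eq: "s \<ge> 0 \<Longrightarrow> u_clamp s = (\<lambda>x. u x s)"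
  by (simp add: u_clamp_def fun_eq_iff)

lemma u_clamp_nonneg: "u_clamp s x \<ge> 0"
  by (simp add: u_clamp_def nonneg)

lemma continuous_on_u_clamp: "continuous_on UNIV (\<lambda>z. u_clamp (fst z) (snd z))"
proof -
  have c: "continuous_on UNIV (\<lambda>z::real \<times> (real^3). (snd z, max (fst z) 0))"
    by (intro continuous_intros)
  have "(\<lambda>z::real \<times> (real^3). (snd z, max (fst z) 0)) ` UNIV \<subseteq> UNIV \<times> {0..}" by auto
  from continuous_on_compose2[OF continuous_u c this] show ?thesis by (simp add: u_clamp_def)
qed

lemma newton_pot_nonneg: "s \<ge> 0 \<Longrightarrow> newton_pot u x s \<ge> 0"
  unfolding newton_pot_def using nonneg by (auto intro!: integral_nonneg divide_nonneg_nonneg)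

lemma continuous_on_slice:
  fixes f :: "(real^3) \<times> real \<Rightarrow> real"
  assumes "continuous_on (UNIV \<times> {0<..}) f" "s > 0"
  shows "continuous_on UNIV (\<lambda>x. f (x, s))"
  by (rule continuous_on_compose2[OF assms(1)]) (use assms(2) in \<open>auto intro: continuous_intros\<close>)

lemma u_slice_has_derivative:
  assumes "s > 0"
  shows "((\<lambda>x. u x s) has_derivative du s x) (at x)"
proof -
  let ?u = "\<lambda>z. u (fst z) (snd z)"
  have "((\<lambda>x. (x, s)) has_derivative (\<lambda>v. (v, 0))) (at x)"
    by (auto intro!: derivative_eq_intros)
  from diff_chain_at[OF this smooth_on_has_derivative[OF smooth_u]]
  show ?thesis using assms by (simp add: du_def[abs_def] o_def)
qed

lemma continuous_on_du: "s > 0 \<Longrightarrow> continuous_on UNIV (\<lambda>x. du s x v)"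
  unfolding du_def using continuous_on_slice[OF smooth_on_continuous_on_derivative[OF smooth_u]]
  by simp

lemma continuous_on_newton_pot: "s > 0 \<Longrightarrow> continuous_on UNIV (\<lambda>x. newton_pot u x s)"
  using continuous_on_slice[OF smooth_on_continuous_on[OF smooth_pot]] by simp

lemma measurable_extensions [measurable]:
  "(\<lambda>z. u_clamp (fst z) (snd z)) \<in> borel_measurable borel"
  "(\<lambda>z. pot_pos (fst z) (snd z)) \<in> borel_measurable borel"
  "(\<lambda>z. deriv_vec (du (fst z)) (snd z)) \<in> borel_measurable borel"
proof -
  show "(\<lambda>z. u_clamp (fst z) (snd z)) \<in> borel_measurable borel"
    using continuous_on_u_clamp by (rule borel_measurable_continuous_onI)
  show "(\<lambda>z. pot_pos (fst z) (snd z)) \<in> borel_measurable borel"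
    unfolding pot_pos_def using borel_measurable_positive_time[OF smooth_on_continuous_on[OF smooth_pot]]
    by (simp only: fst_conv snd_conv)
  have "(\<lambda>z. du (fst z) (snd z) v) \<in> borel_measurable borel" for v
    unfolding du_def
    using borel_measurable_positive_time[OF smooth_on_continuous_on_derivative[OF smooth_u, of "(v, 0)"]]
    by (simp only: fst_conv snd_conv)
  then show "(\<lambda>z. deriv_vec (du (fst z)) (snd z)) \<in> borel_measurable borel"
    unfolding deriv_vec_def by (rule borel_measurable_vec_lambda)
qed

end

locale energy_estimate = poincare_solution +
  fixes p k :: real and \<eta> :: "real^3 \<Rightarrow> real" and x0 :: "real^3" and R :: real
  assumes p_gt_1: "p > 1" and k_nonneg: "k \<ge> 0" and smooth_\<eta>: "smooth_on UNIV \<eta>"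
    and \<eta>_nonneg: "\<And>x. \<eta> x \<ge> 0" and \<eta>_support_ball: "{x. \<eta> x \<noteq> 0} \<subseteq> ball x0 R"
begin

abbreviation D\<eta> :: "real^3 \<Rightarrow> real^3 \<Rightarrow> real" where
  "D\<eta> x \<equiv> frechet_derivative \<eta> (at x)"

abbreviation uk :: "real \<Rightarrow> real^3 \<Rightarrow> real" where
  "uk s x \<equiv> max (u_clamp s x - k) 0"

definition mass :: "real \<Rightarrow> real \<Rightarrow> ennreal" where
  "mass r s = (\<integral>\<^sup>+x. ennreal ((\<eta> x)\<^sup>2 * u_clamp s x * uk s x powr r) \<partial>lborel)"

definition level :: "real \<Rightarrow> real \<Rightarrow> ennreal" where
  "level r s = (\<integral>\<^sup>+x. ennreal ((\<eta> x)\<^sup>2 * uk s x powr r) \<partial>lborel)"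

definition energy :: "real \<Rightarrow> ennreal" where
  "energy s = (\<integral>\<^sup>+x. ennreal (pot_pos s x * (norm (cutoff_pow_grad (p / 2) k (u_clamp s) (du s) \<eta> D\<eta> x))\<^sup>2) \<partial>lborel)"

lemma measurable_time_integrands [measurable]:
  "mass r \<in> borel_measurable lborel" "level r \<in> borel_measurable lborel" "energy \<in> borel_measurable lborel"
proof -
  have snd: "continuous_on UNIV (\<lambda>z::real \<times> (real^3). snd z)" by (intro continuous_intros)
  have "continuous_on UNIV (\<lambda>z::real \<times> (real^3). \<eta> (snd z))"
    "continuous_on UNIV (\<lambda>z::real \<times> (real^3). deriv_vec D\<eta> (snd z))"
    using continuous_on_compose2[OF smooth_on_continuous_on[OF smooth_\<eta>] snd]
      continuous_on_compose2[OF continuous_on_deriv_vec[OF smooth_on_continuous_on_derivative[OF smooth_\<eta>]] snd]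
    by auto
  then have [measurable]: "(\<lambda>z::real \<times> (real^3). \<eta> (snd z)) \<in> borel_measurable borel"
    "(\<lambda>z::real \<times> (real^3). deriv_vec D\<eta> (snd z)) \<in> borel_measurable borel"
    by (simp_all add: borel_measurable_continuous_onI)
  show "mass r \<in> borel_measurable lborel"
    unfolding mass_def[abs_def] by (rule measurable_nn_integral_slice) measurable
  show "level r \<in> borel_measurable lborel"
    unfolding level_def[abs_def] by (rule measurable_nn_integral_slice) measurable
  show "energy \<in> borel_measurable lborel"
    unfolding energy_def[abs_def] cutoff_pow_grad_def
    by (rule measurable_nn_integral_slice) measurable
qed

lemma cutoff_slice_at: "s > 0 \<Longrightarrow> cutoff_slice (\<lambda>x. u x s) \<eta> (du s) D\<eta> (p / 2)"
  using p_gt_1 u_slice_has_derivative continuous_on_du smooth_on_has_derivative[OF smooth_\<eta>]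
    smooth_on_continuous_on_derivative[OF smooth_\<eta>] nonneg \<eta>_nonneg
    bounded_subset[OF bounded_ball \<eta>_support_ball]
  by unfold_locales auto

lemma mass_le_energy_level: "s > 0 \<Longrightarrow> mass p s \<le> ennreal \<epsilon> * energy s + ennreal C * level p s"
proof -
  assume s: "s > 0"
  interpret cutoff_slice "\<lambda>x. u x s" \<eta> "du s" D\<eta> "p / 2" k by (rule cutoff_slice_at[OF s])
  have "pot_pos s = (\<lambda>x. newton_pot u x s)" using s by (simp add: pot_pos_def fun_eq_iff)
  with poincare_cutoff_pow[OF continuous_on_newton_pot[OF s] newton_pot_nonneg \<epsilon>_pos poincare[OF s]] s
  show ?thesis
    unfolding mass_def energy_def level_def u_clamp_eq[OF less_imp_le[OF s]]
    by (simp add: powr_half_squared power_mult_distrib mult.assoc)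
qed

lemma mass_split: "ennreal k * mass (p - 1) s \<le> mass p s + ennreal (2 * k\<^sup>2) * level (p - 1) s"
proof -
  have "continuous_on UNIV (\<lambda>x::real^3. (s, x))" by (intro continuous_intros)
  from continuous_on_compose2[OF continuous_on_u_clamp this]
  have "continuous_on UNIV (u_clamp s)" by simp
  then have [measurable]: "\<eta> \<in> borel_measurable borel" "u_clamp s \<in> borel_measurable borel"
    using smooth_on_continuous_on[OF smooth_\<eta>] by (simp_all add: borel_measurable_continuous_onI)
  have u: "u_clamp s x \<ge> 0" for x by (rule u_clamp_nonneg)
  have "ennreal k * mass (p - 1) s = (\<integral>\<^sup>+x. ennreal (k * ((\<eta> x)\<^sup>2 * u_clamp s x * uk s x powr (p - 1))) \<partial>lborel)"
    unfolding mass_def using k_nonneg u by (simp add: nn_integral_cmult[symmetric] ennreal_mult)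
  also have "\<dots> \<le> (\<integral>\<^sup>+x. ennreal ((\<eta> x)\<^sup>2 * u_clamp s x * uk s x powr p)
      + ennreal (2 * k\<^sup>2) * ennreal ((\<eta> x)\<^sup>2 * uk s x powr (p - 1)) \<partial>lborel)"
  proof (intro nn_integral_mono)
    fix x
    let ?w = "(\<eta> x)\<^sup>2" and ?m = "uk s x"
    have "k * (?w * u_clamp s x * ?m powr (p - 1))
        \<le> ?w * u_clamp s x * ?m powr p + 2 * k\<^sup>2 * (?w * ?m powr (p - 1))"
      using u k_nonneg by (intro truncation_level_ineq) simp_all
    then have "ennreal (k * (?w * u_clamp s x * ?m powr (p - 1)))
        \<le> ennreal (?w * u_clamp s x * ?m powr p + 2 * k\<^sup>2 * (?w * ?m powr (p - 1)))"
      by (rule ennreal_leI)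
    also have "\<dots> = ennreal (?w * u_clamp s x * ?m powr p) + ennreal (2 * k\<^sup>2) * ennreal (?w * ?m powr (p - 1))"
      using u[of x] by (simp add: ennreal_plus ennreal_mult)
    finally show "ennreal (k * (?w * u_clamp s x * ?m powr (p - 1)))
        \<le> ennreal (?w * u_clamp s x * ?m powr p) + ennreal (2 * k\<^sup>2) * ennreal (?w * ?m powr (p - 1))" .
  qed
  also have "\<dots> = mass p s + ennreal (2 * k\<^sup>2) * level (p - 1) s"
    unfolding mass_def level_def by (simp add: nn_integral_add nn_integral_cmult)
  finally show ?thesis .
qed

lemma level_eq_ball: "level r s = (\<integral>\<^sup>+x\<in>ball x0 R. ennreal ((\<eta> x)\<^sup>2 * uk s x powr r) \<partial>lborel)"
  unfolding level_def using \<eta>_support_ball by (intro nn_integral_cong) (auto simp: indicator_def)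

lemma energy_le_grad3:
  assumes "s > 0"
  shows "energy s \<le> (\<integral>\<^sup>+x\<in>ball x0 R.
    ennreal (newton_pot u x s * (norm (grad3 (\<lambda>y. \<eta> y * max (u y s - k) 0 powr (p / 2)) x))\<^sup>2) \<partial>lborel)"
  unfolding energy_def
proof (intro nn_integral_mono)
  interpret cutoff_slice "\<lambda>x. u x s" \<eta> "du s" D\<eta> "p / 2" k by (rule cutoff_slice_at[OF assms])
  fix x
  show "ennreal (pot_pos s x * (norm (cutoff_pow_grad (p / 2) k (u_clamp s) (du s) \<eta> D\<eta> x))\<^sup>2)
      \<le> ennreal (newton_pot u x s * (norm (grad3 (\<lambda>y. \<eta> y * max (u y s - k) 0 powr (p / 2)) x))\<^sup>2)
        * indicator (ball x0 R) x"
  proof (cases "x \<in> ball x0 R")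
    case True
    have "(norm (grad x))\<^sup>2 \<le> (norm (grad3 (\<lambda>y. \<eta> y * trunc y) x))\<^sup>2"
      using norm_grad_le_grad3 by (rule power_mono) simp
    then have "newton_pot u x s * (norm (grad x))\<^sup>2
        \<le> newton_pot u x s * (norm (grad3 (\<lambda>y. \<eta> y * trunc y) x))\<^sup>2"
      using newton_pot_nonneg[of s x] assms by (intro mult_left_mono) simp_all
    moreover have "pot_pos s x = newton_pot u x s" "u_clamp s = (\<lambda>x. u x s)"
      using assms by (simp_all add: pot_pos_def u_clamp_eq)
    ultimately show ?thesis using True by (simp add: ennreal_leI)
  next
    case False
    then have "\<eta> x = 0" using \<eta>_support_ball by auto
    then show ?thesis using assms grad_eq_0 by (simp add: u_clamp_eq)
  qed
qed

lemma energy_le_grad3_full: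
  assumes "s > 0"
  shows "energy s \<le> (\<integral>\<^sup>+x.
    ennreal (newton_pot u x s * (norm (grad3 (\<lambda>y. \<eta> y * max (u y s - k) 0 powr (p / 2)) x))\<^sup>2) \<partial>lborel)"
proof -
  note energy_le_grad3[OF assms]
  also have "(\<integral>\<^sup>+x\<in>ball x0 R.
      ennreal (newton_pot u x s * (norm (grad3 (\<lambda>y. \<eta> y * max (u y s - k) 0 powr (p / 2)) x))\<^sup>2) \<partial>lborel)
    \<le> (\<integral>\<^sup>+x\<in>UNIV.
      ennreal (newton_pot u x s * (norm (grad3 (\<lambda>y. \<eta> y * max (u y s - k) 0 powr (p / 2)) x))\<^sup>2) \<partial>lborel)"
    by (rule nn_set_integral_set_mono) simp
  finally show ?thesis by simp
qed

lemma scaled_mass_le: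
  assumes "s > 0"
  shows "ennreal (p - 1) * mass p s \<le> ennreal (\<epsilon> * (p - 1)) * energy s + ennreal (p * C) * level p s"
proof -
  have "ennreal (p - 1) * mass p s \<le> ennreal (p - 1) * (ennreal \<epsilon> * energy s + ennreal C * level p s)"
    using mass_le_energy_level[OF assms] by (rule mult_left_mono) simp
  also have "\<dots> = ennreal (\<epsilon> * (p - 1)) * energy s + (ennreal (p - 1) * ennreal C) * level p s"
    using p_gt_1 \<epsilon>_pos by (simp add: distrib_left ennreal_mult mult.commute mult.left_commute)
  also have "\<dots> \<le> ennreal (\<epsilon> * (p - 1)) * energy s + (ennreal p * ennreal C) * level p s"
    by (intro add_left_mono mult_right_mono ennreal_leI) simp_all
  also have "ennreal p * ennreal C = ennreal (p * C)"
    using p_gt_1 by (simp add: ennreal_mult')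
  finally show ?thesis .
qed

lemma first_energy_inequality:
  assumes "0 \<le> t"
  shows "ennreal (p - 1) * (\<integral>\<^sup>+s\<in>{t..T}. (\<integral>\<^sup>+x. ennreal ((\<eta> x)\<^sup>2 * u x s * max (u x s - k) 0 powr p) \<partial>lborel) \<partial>lborel)
    \<le> ennreal (\<epsilon> * (p - 1)) * (\<integral>\<^sup>+s\<in>{t..T}. (\<integral>\<^sup>+x\<in>ball x0 R.
          ennreal (newton_pot u x s * (norm (grad3 (\<lambda>y. \<eta> y * max (u y s - k) 0 powr (p / 2)) x))\<^sup>2) \<partial>lborel) \<partial>lborel)
      + ennreal (p * C) * (\<integral>\<^sup>+s\<in>{t..T}. (\<integral>\<^sup>+x\<in>ball x0 R. ennreal ((\<eta> x)\<^sup>2 * max (u x s - k) 0 powr p) \<partial>lborel) \<partial>lborel)"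
    (is "_ * ?L \<le> ennreal ?a * ?G + ennreal ?b * ?Y")
proof -
  have L: "?L = (\<integral>\<^sup>+s\<in>{t..T}. mass p s \<partial>lborel)"
    using assms by (intro set_nn_integral_cong) (simp_all add: mass_def u_clamp_eq)
  have Y: "?Y = (\<integral>\<^sup>+s\<in>{t..T}. level p s \<partial>lborel)"
    using assms by (intro set_nn_integral_cong) (simp_all add: level_eq_ball u_clamp_eq)
  have G: "(\<integral>\<^sup>+s\<in>{t..T}. energy s \<partial>lborel) \<le> ?G"
    using assms by (intro set_nn_integral_Icc_mono_AE energy_le_grad3) simp
  have "ennreal (p - 1) * mass p s \<le> ennreal ?a * energy s + ennreal ?b * level p s + 0 * level p s"
    if "s \<in> {t..T}" "s \<noteq> t" for s
    using scaled_mass_le[of s] that assms by simp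
  then have "AE s\<in>{t..T} in lborel.
      ennreal (p - 1) * mass p s \<le> ennreal ?a * energy s + ennreal ?b * level p s + 0 * level p s"
    by (intro eventually_mono[OF AE_lborel_singleton[of t]]) simp
  from set_nn_integral_le_lincomb[OF measurable_time_integrands(1,3,2,2) _ this]
  have "ennreal (p - 1) * (\<integral>\<^sup>+s\<in>{t..T}. mass p s \<partial>lborel)
      \<le> ennreal ?a * (\<integral>\<^sup>+s\<in>{t..T}. energy s \<partial>lborel) + ennreal ?b * (\<integral>\<^sup>+s\<in>{t..T}. level p s \<partial>lborel)"
    by simp
  also have "\<dots> \<le> ennreal ?a * ?G + ennreal ?b * ?Y"
    unfolding Y using G by (intro add_right_mono mult_left_mono) simp_all
  finally show ?thesis unfolding L .
qed

lemma scaled_level_mass_le: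
  assumes "s > 0"
  shows "ennreal (p * k) * mass (p - 1) s
    \<le> ennreal (p * \<epsilon>) * energy s + ennreal (p * C) * level p s + ennreal (2 * p * k\<^sup>2) * level (p - 1) s"
proof -
  have "ennreal (p * k) * mass (p - 1) s = ennreal p * (ennreal k * mass (p - 1) s)"
    using p_gt_1 k_nonneg by (simp add: ennreal_mult mult.assoc)
  also have "\<dots> \<le> ennreal p * (mass p s + ennreal (2 * k\<^sup>2) * level (p - 1) s)"
    using mass_split by (rule mult_left_mono) simp
  also have "\<dots> \<le> ennreal p * (ennreal \<epsilon> * energy s + ennreal C * level p s + ennreal (2 * k\<^sup>2) * level (p - 1) s)"
    using mass_le_energy_level[OF assms] by (intro mult_left_mono add_right_mono) simp_all
  also have "\<dots> = ennreal (p * \<epsilon>) * energy s + ennreal (p * C) * level p s + ennreal (2 * p * k\<^sup>2) * level (p - 1) s"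
    using p_gt_1 by (simp add: distrib_left ennreal_mult' mult.assoc mult.left_commute)
  finally show ?thesis .
qed

lemma second_energy_inequality:
  assumes "0 \<le> t"
  shows "ennreal (p * k) * (\<integral>\<^sup>+s\<in>{t..T}. (\<integral>\<^sup>+x. ennreal ((\<eta> x)\<^sup>2 * u x s * max (u x s - k) 0 powr (p - 1)) \<partial>lborel) \<partial>lborel)
    \<le> ennreal (p * \<epsilon>) * (\<integral>\<^sup>+s\<in>{t..T}. (\<integral>\<^sup>+x.
          ennreal (newton_pot u x s * (norm (grad3 (\<lambda>y. \<eta> y * max (u y s - k) 0 powr (p / 2)) x))\<^sup>2) \<partial>lborel) \<partial>lborel)
      + ennreal (p * C) * (\<integral>\<^sup>+s\<in>{t..T}. (\<integral>\<^sup>+x. ennreal ((\<eta> x)\<^sup>2 * max (u x s - k) 0 powr p) \<partial>lborel) \<partial>lborel)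
      + ennreal (2 * p * k\<^sup>2) *
          (\<integral>\<^sup>+s\<in>{0..T}. (\<integral>\<^sup>+x. ennreal ((\<eta> x)\<^sup>2 * max (u x s - k) 0 powr (p - 1)) \<partial>lborel) \<partial>lborel)"
    (is "_ * ?L \<le> ennreal ?a * ?G + ennreal ?b * ?Y + ennreal ?d * ?Z")
proof -
  have L: "?L = (\<integral>\<^sup>+s\<in>{t..T}. mass (p - 1) s \<partial>lborel)"
    using assms by (intro set_nn_integral_cong) (simp_all add: mass_def u_clamp_eq)
  have Y: "?Y = (\<integral>\<^sup>+s\<in>{t..T}. level p s \<partial>lborel)"
    using assms by (intro set_nn_integral_cong) (simp_all add: level_def u_clamp_eq)
  have G: "(\<integral>\<^sup>+s\<in>{t..T}. energy s \<partial>lborel) \<le> ?G"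
    using assms by (intro set_nn_integral_Icc_mono_AE energy_le_grad3_full) simp
  have "(\<integral>\<^sup>+s\<in>{t..T}. level (p - 1) s \<partial>lborel)
      = (\<integral>\<^sup>+s\<in>{t..T}. (\<integral>\<^sup>+x. ennreal ((\<eta> x)\<^sup>2 * max (u x s - k) 0 powr (p - 1)) \<partial>lborel) \<partial>lborel)"
    using assms by (intro set_nn_integral_cong) (simp_all add: level_def u_clamp_eq)
  also have "\<dots> \<le> ?Z" using assms by (intro nn_set_integral_set_mono) auto
  finally have Z: "(\<integral>\<^sup>+s\<in>{t..T}. level (p - 1) s \<partial>lborel) \<le> ?Z" .
  have "AE s\<in>{t..T} in lborel. ennreal (p * k) * mass (p - 1) s
      \<le> ennreal ?a * energy s + ennreal ?b * level p s + ennreal ?d * level (p - 1) s"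
    using assms by (intro eventually_mono[OF AE_lborel_singleton[of t]] impI scaled_level_mass_le) auto
  from set_nn_integral_le_lincomb[OF measurable_time_integrands(1,3,2,2) _ this]
  have "ennreal (p * k) * (\<integral>\<^sup>+s\<in>{t..T}. mass (p - 1) s \<partial>lborel)
      \<le> ennreal ?a * (\<integral>\<^sup>+s\<in>{t..T}. energy s \<partial>lborel) + ennreal ?b * (\<integral>\<^sup>+s\<in>{t..T}. level p s \<partial>lborel)
        + ennreal ?d * (\<integral>\<^sup>+s\<in>{t..T}. level (p - 1) s \<partial>lborel)"
    by simp
  also have "\<dots> \<le> ennreal ?a * ?G + ennreal ?b * ?Y + ennreal ?d * ?Z"
    unfolding Y using G Z by (intro add_mono mult_left_mono order_refl) simp_all
  finally show ?thesis unfolding L .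
qed

end

theorem mainTheorem2:
  fixes u :: "real^3 \<Rightarrow> real \<Rightarrow> real"
  assumes nonneg: "\<forall>x t. t \<ge> 0 \<longrightarrow> u x t \<ge> 0"
    and smooth: "smooth_on (UNIV \<times> {0<..}) (\<lambda>z. u (fst z) (snd z))"
    and cont: "continuous_on (UNIV \<times> {0..}) (\<lambda>z. u (fst z) (snd z))"
    and decay: "\<forall>t\<ge>0. integrable lborel (\<lambda>x. u x t)"
    and smooth_a: "smooth_on (UNIV \<times> {0<..}) (\<lambda>z. newton_pot u (fst z) (snd z))"
    and pde: "solves_PDE u"
    and poinc: "eps_poincare u"
  shows "\<forall>p::real. p > 1 \<longrightarrow> (\<forall>R::real. R > 0 \<longrightarrow> (\<forall>\<epsilon>::real. \<epsilon> > 0 \<longrightarrow>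
    (\<exists>C::real. \<forall>k t T. \<forall>x0::real^3. \<forall>\<eta>::real^3 \<Rightarrow> real.
      k \<ge> 0 \<and> 0 \<le> t \<and> t < T \<and> smooth_on UNIV \<eta> \<and> (\<forall>x. \<eta> x \<ge> 0)
      \<and> {x. \<eta> x \<noteq> 0} \<subseteq> ball x0 R \<longrightarrow>
      (let uk = (\<lambda>x s. max (u x s - k) 0);
           gr = (\<lambda>x s. norm (grad3 (\<lambda>y. \<eta> y * (uk y s) powr (p / 2)) x))
       in
      ennreal (p - 1) * (\<integral>\<^sup>+s\<in>{t..T}. (\<integral>\<^sup>+x. ennreal ((\<eta> x)\<^sup>2 * u x s * (uk x s) powr p) \<partial>lborel) \<partial>lborel)
        \<le> ennreal (\<epsilon> * (p - 1)) *
             (\<integral>\<^sup>+s\<in>{t..T}. (\<integral>\<^sup>+x\<in>ball x0 R. ennreal (newton_pot u x s * (gr x s)\<^sup>2) \<partial>lborel) \<partial>lborel)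
          + ennreal C * (\<integral>\<^sup>+s\<in>{t..T}. (\<integral>\<^sup>+x\<in>ball x0 R. ennreal ((\<eta> x)\<^sup>2 * (uk x s) powr p) \<partial>lborel) \<partial>lborel)
      \<and>
      ennreal (p * k) * (\<integral>\<^sup>+s\<in>{t..T}. (\<integral>\<^sup>+x. ennreal ((\<eta> x)\<^sup>2 * u x s * (uk x s) powr (p - 1)) \<partial>lborel) \<partial>lborel)
        \<le> ennreal (p * \<epsilon>) *
             (\<integral>\<^sup>+s\<in>{t..T}. (\<integral>\<^sup>+x. ennreal (newton_pot u x s * (gr x s)\<^sup>2) \<partial>lborel) \<partial>lborel)
          + ennreal C * (\<integral>\<^sup>+s\<in>{t..T}. (\<integral>\<^sup>+x. ennreal ((\<eta> x)\<^sup>2 * (uk x s) powr p) \<partial>lborel) \<partial>lborel)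
          + ennreal (2 * p * k\<^sup>2) *
             (\<integral>\<^sup>+s\<in>{0..T}. (\<integral>\<^sup>+x. ennreal ((\<eta> x)\<^sup>2 * (uk x s) powr (p - 1)) \<partial>lborel) \<partial>lborel)))))"
proof -
  have "\<exists>C. poincare_solution u \<epsilon> C" if \<epsilon>: "\<epsilon> > 0" for \<epsilon>
  proof -
    obtain C where "\<forall>t>0. \<forall>\<phi> g. weak_grad \<phi> g \<longrightarrow>
        (\<integral>\<^sup>+x. ennreal (u x t * (\<phi> x)\<^sup>2) \<partial>lborel)
          \<le> ennreal \<epsilon> * (\<integral>\<^sup>+x. ennreal (newton_pot u x t * (norm (g x))\<^sup>2) \<partial>lborel)
            + ennreal C * (\<integral>\<^sup>+x. ennreal ((\<phi> x)\<^sup>2) \<partial>lborel)"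
      using poinc[unfolded eps_poincare_def, rule_format, OF \<epsilon>] by blast
    then have "poincare_solution u \<epsilon> C"
      using nonneg smooth cont smooth_a \<epsilon> by unfold_locales auto
    then show ?thesis ..
  qed
  then obtain C where solution: "\<And>\<epsilon>. \<epsilon> > 0 \<Longrightarrow> poincare_solution u \<epsilon> (C \<epsilon>)" by metis
  have estimate: "energy_estimate u \<epsilon> (C \<epsilon>) p k \<eta> x0 R"
    if "\<epsilon> > 0" "p > 1" "k \<ge> 0" "smooth_on UNIV \<eta>" "\<forall>x. \<eta> x \<ge> 0" "{x. \<eta> x \<noteq> 0} \<subseteq> ball x0 R"
    for \<epsilon> p k \<eta> x0 R
    using solution that by (simp add: energy_estimate_def energy_estimate_axioms_def)
  show ?thesis
    by (intro allI impI, rule_tac x = "p * C \<epsilon>" in exI)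
       (auto simp: Let_def intro!: energy_estimate.first_energy_inequality[OF estimate]
          energy_estimate.second_energy_inequality[OF estimate])
qed

end
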